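(* Let $\mathbf{L}=\langle L,\leq,0,1\rangle$ be a totally ordered complete lattice and let $\mathcal{D}_1,\mathcal{D}_2$ be ranked data tables on the same relation scheme $R$. Then $\mathcal{D}_1 \sqsubseteq \mathcal{D}_2$ if and only if there exists an order-preserving map $f\colon L\to L$ such that $\mathcal{D}_1\circ f=\mathcal{D}_2$.
   Context: A relation scheme $R$ is a finite set of attributes, each with a (at most countable) set of admissible values; a tuple on $R$ assigns to each attribute of $R$ an admissible value; $\mathrm{Tupl}(R)$ is the set of all tuples on $R$. A ranked data table (RDT) on $R$ is a map $\mathcal{D}\colon\mathrm{Tupl}(R)\to L$ with $\{r;\ \mathcal{D}(r)>0\}$ finite. For an RDT $\mathcal{D}$ and $r\in\mathrm{Tupl}(R)$, $\mathcal{U}(\mathcal{D},r)=\{r'\in\mathrm{Tupl}(R);\ \mathcal{D}(r')\geq\mathcal{D}(r)\}$; $\mathcal{D}_1\sqsubseteq\mathcal{D}_2$ means $\mathcal{U}(\mathcal{D}_1,r)\subseteq\mathcal{U}(\mathcal{D}_2,r)$ for all $r\in\mathrm{Tupl}(R)$. A map $f$ is order preserving if $a\leq b$ implies $f(a)\leq f(b)$. For a map $f$ on a subset of $L$ containing the values of $\mathcal{D}$, $\mathcal{D}\circ f$ denotes the map $r\mapsto f(\mathcal{D}(r))$. *)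

theory Defs
  imports Main "HOL-Library.Countable_Set"
begin

text \<open>A tuple on R assigns
  to each attribute of R an admissible value; outside R it is fixed to undefined, so
  that tuples on R are exactly the maps R -> values.\<close>

definition rel_scheme :: "'a set \<Rightarrow> ('a \<Rightarrow> 'v set) \<Rightarrow> bool" where
  "rel_scheme R Dom \<longleftrightarrow> finite R \<and> (\<forall>y\<in>R. countable (Dom y))"

definition Tupl :: "'a set \<Rightarrow> ('a \<Rightarrow> 'v set) \<Rightarrow> ('a \<Rightarrow> 'v) set" where
  "Tupl R Dom = {r. (\<forall>y\<in>R. r y \<in> Dom y) \<and> (\<forall>y. y \<notin> R \<longrightarrow> r y = undefined)}"

text \<open>A ranked data table on R: a map from Tupl R to L (only its values on Tupl R
  matter) with finitely many tuples of positive rank.\<close>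

definition is_RDT :: "'a set \<Rightarrow> ('a \<Rightarrow> 'v set) \<Rightarrow> (('a \<Rightarrow> 'v) \<Rightarrow> 'l::complete_lattice) \<Rightarrow> bool" where
  "is_RDT R Dom D \<longleftrightarrow> finite {r \<in> Tupl R Dom. D r > bot}"

definition Ucone :: "'a set \<Rightarrow> ('a \<Rightarrow> 'v set) \<Rightarrow> (('a \<Rightarrow> 'v) \<Rightarrow> 'l::order) \<Rightarrow> ('a \<Rightarrow> 'v) \<Rightarrow> ('a \<Rightarrow> 'v) set" where
  "Ucone R Dom D r = {r' \<in> Tupl R Dom. D r' \<ge> D r}"

definition rdt_le :: "'a set \<Rightarrow> ('a \<Rightarrow> 'v set) \<Rightarrow> (('a \<Rightarrow> 'v) \<Rightarrow> 'l::order) \<Rightarrow> (('a \<Rightarrow> 'v) \<Rightarrow> 'l) \<Rightarrow> bool" where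
  "rdt_le R Dom D1 D2 \<longleftrightarrow> (\<forall>r\<in>Tupl R Dom. Ucone R Dom D1 r \<subseteq> Ucone R Dom D2 r)"

end

theory Submission
  imports Defs
begin

text \<open>D1 \<sqsubseteq> D2 says exactly that D1 r \<le> D1 r' implies D2 r \<le> D2 r' on tuples,
  i.e. that the D1-rank of a tuple determines its D2-rank monotonically. An explicit
  factor sends a to the supremum of the D2-ranks of all tuples of D1-rank at most a.\<close>

definition mono_factor :: "'b set \<Rightarrow> ('b \<Rightarrow> 'l::order) \<Rightarrow> ('b \<Rightarrow> 'm::complete_lattice) \<Rightarrow> 'l \<Rightarrow> 'm" where
  "mono_factor A g h a = Sup (h ` {x \<in> A. g x \<le> a})"

lemma mono_mono_factor: "mono (mono_factor A g h)"
  unfolding mono_def mono_factor_def by (auto intro!: Sup_subset_mono dest: order_trans)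

lemma mono_factor_apply:
  assumes "\<And>x y. x \<in> A \<Longrightarrow> y \<in> A \<Longrightarrow> g x \<le> g y \<Longrightarrow> h x \<le> h y"
    and "x \<in> A"
  shows "mono_factor A g h (g x) = h x"
  unfolding mono_factor_def
proof (rule antisym)
  show "Sup (h ` {y \<in> A. g y \<le> g x}) \<le> h x"
    using assms by (auto intro!: Sup_least)
  show "h x \<le> Sup (h ` {y \<in> A. g y \<le> g x})"
    using assms(2) by (auto intro!: Sup_upper)
qed

lemma exists_mono_factor_iff:
  fixes g :: "'b \<Rightarrow> 'l::order" and h :: "'b \<Rightarrow> 'm::complete_lattice"
  shows "(\<exists>f. mono f \<and> (\<forall>x\<in>A. f (g x) = h x)) \<longleftrightarrow>
         (\<forall>x\<in>A. \<forall>y\<in>A. g x \<le> g y \<longrightarrow> h x \<le> h y)"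
proof
  assume "\<exists>f. mono f \<and> (\<forall>x\<in>A. f (g x) = h x)"
  then obtain f where "mono f" and f: "\<forall>x\<in>A. f (g x) = h x"
    by blast
  show "\<forall>x\<in>A. \<forall>y\<in>A. g x \<le> g y \<longrightarrow> h x \<le> h y"
    using monoD[OF \<open>mono f\<close>] f by fastforce
next
  assume "\<forall>x\<in>A. \<forall>y\<in>A. g x \<le> g y \<longrightarrow> h x \<le> h y"
  then have "\<forall>x\<in>A. mono_factor A g h (g x) = h x"
    by (simp add: mono_factor_apply)
  with mono_mono_factor show "\<exists>f. mono f \<and> (\<forall>x\<in>A. f (g x) = h x)"
    by blast
qed

lemma rdt_le_iff:
  "rdt_le R Dom D1 D2 \<longleftrightarrow>
   (\<forall>r\<in>Tupl R Dom. \<forall>r'\<in>Tupl R Dom. D1 r \<le> D1 r' \<longrightarrow> D2 r \<le> D2 r')"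
  unfolding rdt_le_def Ucone_def by blast

theorem theorem4:
  fixes R :: "'a set" and Dom :: "'a \<Rightarrow> 'v set"
    and D1 D2 :: "('a \<Rightarrow> 'v) \<Rightarrow> 'l::{complete_lattice, linorder}"
  assumes "rel_scheme R Dom"
    and "is_RDT R Dom D1" and "is_RDT R Dom D2"
  shows "rdt_le R Dom D1 D2 \<longleftrightarrow>
         (\<exists>f :: 'l \<Rightarrow> 'l. mono f \<and> (\<forall>r\<in>Tupl R Dom. f (D1 r) = D2 r))"
  by (simp only: rdt_le_iff exists_mono_factor_iff)

end
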